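(* There is a polynomial $q$ such that for every $\mathsf{C\text{-}RASP}_+$ program $P$ with $L(P)\neq\emptyset$ there exists a string $w\in L(P)$ with $|w|\le 2^{q(|P|)}$. This exponential bound is optimal in the worst case: there is an infinite family of $\mathsf{C\text{-}RASP}_+$ programs $P_n$ with nonempty languages whose shortest accepted string has length exponential in $|P_n|$.
   Context: $\mathsf{C\text{-}RASP}_+$ formulas over a finite alphabet $\Sigma$: $\phi ::= \sigma \mid \neg\phi \mid \phi_1\wedge\phi_2 \mid \sum_{t\in\mathcal T}\alpha_t t\sim k$, terms $t ::= \#[\phi] \mid c$, with $\sigma\in\Sigma$, $\alpha_t,k,c\in\mathbb{N}$, ${\sim}\in\{\ge,>,=,<,\le\}$. At position $i$ of $w$: $w,i\models\sigma$ iff $w_i=\sigma$; Boolean connectives as usual; $\#[\phi]$ evaluates to $|\{j\in[1,i]: w,j\models\phi\}|$, $c$ to $c$, and comparisons are integer comparisons. $w\models\phi$ iff $w,|w|\models\phi$; $L(\phi)=\{w:w\models\phi\}$. Programs are straight-line (DAG) representations $(\phi_1,\dots,\phi_m)$ with references to earlier lines; the size $|P|$ is the total number of symbols with constants encoded in binary and each reference counted as 1. *)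

theory Defs
  imports Main "HOL-Computational_Algebra.Polynomial"
begin

datatype cmp = CGe | CGt | CEq | CLt | CLe

datatype 'a form =
    Sym 'a
  | Neg "'a form"
  | Conj "'a form" "'a form"
  | Cmp "(nat \<times> 'a cterm) list" cmp nat  \<comment> \<open>\<Sum> \<alpha>_t t \<sim> k\<close>
  | Ref nat                                 \<comment> \<open>reference to an earlier line\<close>
and 'a cterm =
    Cnt "'a form"
  | Cst nat

fun cmp_sem :: "cmp \<Rightarrow> nat \<Rightarrow> nat \<Rightarrow> bool" where
  "cmp_sem CGe x k = (x \<ge> k)"
| "cmp_sem CGt x k = (x > k)"
| "cmp_sem CEq x k = (x = k)"
| "cmp_sem CLt x k = (x < k)"
| "cmp_sem CLe x k = (x \<le> k)"

text \<open>Semantics at position i (1-based) of word w; env gives the truth values of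
  earlier program lines (line index, position).\<close>
fun holds :: "(nat \<Rightarrow> nat \<Rightarrow> bool) \<Rightarrow> 'a list \<Rightarrow> nat \<Rightarrow> 'a form \<Rightarrow> bool"
and tval :: "(nat \<Rightarrow> nat \<Rightarrow> bool) \<Rightarrow> 'a list \<Rightarrow> nat \<Rightarrow> 'a cterm \<Rightarrow> nat" where
  "holds env w i (Sym s) = (1 \<le> i \<and> i \<le> length w \<and> w ! (i - 1) = s)"
| "holds env w i (Neg f) = (\<not> holds env w i f)"
| "holds env w i (Conj f g) = (holds env w i f \<and> holds env w i g)"
| "holds env w i (Cmp ts c k) =
     cmp_sem c (sum_list (map (\<lambda>p. fst p * tval env w i (snd p)) ts)) k"
| "holds env w i (Ref j) = env j i"
| "tval env w i (Cnt f) = card {j \<in> {1..i}. holds env w j f}"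
| "tval env w i (Cst c) = c"

type_synonym 'a prog = "'a form list"

primrec penv :: "'a prog \<Rightarrow> 'a list \<Rightarrow> nat \<Rightarrow> (nat \<Rightarrow> nat \<Rightarrow> bool)" where
  "penv P w 0 = (\<lambda>_ _. False)"
| "penv P w (Suc k) = (penv P w k)(k := (\<lambda>i. holds (penv P w k) w i (P ! k)))"

fun refs :: "'a form \<Rightarrow> nat set"
and trefs :: "'a cterm \<Rightarrow> nat set" where
  "refs (Sym s) = {}"
| "refs (Neg f) = refs f"
| "refs (Conj f g) = refs f \<union> refs g"
| "refs (Cmp ts c k) = (\<Union>p \<in> set ts. trefs (snd p))"
| "refs (Ref j) = {j}"
| "trefs (Cnt f) = refs f"
| "trefs (Cst c) = {}"

definition wf_prog :: "'a prog \<Rightarrow> bool" where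
  "wf_prog P \<longleftrightarrow> P \<noteq> [] \<and> (\<forall>k < length P. \<forall>j \<in> refs (P ! k). j < k)"

definition accepts :: "'a prog \<Rightarrow> 'a list \<Rightarrow> bool" where
  "accepts P w \<longleftrightarrow> penv P w (length P) (length P - 1) (length w)"

definition lang :: "'a prog \<Rightarrow> 'a list set" where
  "lang P = {w. accepts P w}"

fun blen :: "nat \<Rightarrow> nat" where
  "blen n = (if n \<le> 1 then 1 else 1 + blen (n div 2))"

declare blen.simps[simp del]

fun fsize :: "'a form \<Rightarrow> nat"
and tsize :: "'a cterm \<Rightarrow> nat" where
  "fsize (Sym s) = 1"
| "fsize (Neg f) = 1 + fsize f"
| "fsize (Conj f g) = 1 + fsize f + fsize g"
| "fsize (Cmp ts c k) =
     sum_list (map (\<lambda>p. 1 + blen (fst p) + tsize (snd p)) ts) + 1 + blen k"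
| "fsize (Ref j) = 1"
| "tsize (Cnt f) = 1 + fsize f"
| "tsize (Cst c) = blen c"

definition psize :: "'a prog \<Rightarrow> nat" where
  "psize P = sum_list (map fsize P)"

end

theory Submission
  imports Defs "HOL-Library.FuncSet"
begin

text \<open>A count #[\<phi>] enters a program only through comparisons with thresholds, all of
  which are below C = 2^|P| because constants are written in binary, and a linear combination
  with natural coefficients compares with k < C in the same way once every summand is capped
  at C. Hence the vector of the counts of all counted subformulas, capped at C, together with
  the next letter determines the values of all lines at the next position and the next capped
  vector. There are at most (C + 1)^|P| such vectors, so in an accepted word that is longer,
  two proper prefixes have the same vector and the part between them can be cut out.
  Conversely, the one-line program #[a] \<ge> 2^(n+1) has size n + 7, but every word it
  accepts has at least 2^(n+1) letters.\<close>

fun counted :: "'a form \<Rightarrow> 'a form set"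
and tcounted :: "'a cterm \<Rightarrow> 'a form set" where
  "counted (Sym s) = {}"
| "counted (Neg f) = counted f"
| "counted (Conj f g) = counted f \<union> counted g"
| "counted (Cmp ts c k) = (\<Union>p \<in> set ts. tcounted (snd p))"
| "counted (Ref j) = {}"
| "tcounted (Cnt f) = insert f (counted f)"
| "tcounted (Cst c) = {}"

fun thresholds_below :: "nat \<Rightarrow> 'a form \<Rightarrow> bool"
and tthresholds_below :: "nat \<Rightarrow> 'a cterm \<Rightarrow> bool" where
  "thresholds_below C (Sym s) = True"
| "thresholds_below C (Neg f) = thresholds_below C f"
| "thresholds_below C (Conj f g) = (thresholds_below C f \<and> thresholds_below C g)"
| "thresholds_below C (Cmp ts c k) = (k < C \<and> (\<forall>p \<in> set ts. tthresholds_below C (snd p)))"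
| "thresholds_below C (Ref j) = True"
| "tthresholds_below C (Cnt f) = thresholds_below C f"
| "tthresholds_below C (Cst c) = True"

lemma card_UN_set_le_sum_list:
  assumes "\<And>x. x \<in> set xs \<Longrightarrow> finite (A x)"
  shows "card (\<Union>x\<in>set xs. A x) \<le> (\<Sum>x\<leftarrow>xs. card (A x))"
  using assms
proof (induction xs)
  case (Cons a xs)
  then show ?case using card_Un_le[of "A a" "\<Union>x\<in>set xs. A x"] by auto
qed simp

lemma finite_counted:
  fixes f :: "'a form" and t :: "'a cterm"
  shows "finite (counted f)" and "finite (tcounted t)"
  by (induct f and t rule: counted_tcounted.induct) auto

lemma card_counted_le_size:
  fixes f :: "'a form" and t :: "'a cterm"
  shows "card (counted f) \<le> fsize f" and "card (tcounted t) \<le> tsize t"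
proof (induct f and t rule: counted_tcounted.induct)
  case (3 f g)
  then show ?case using card_Un_le[of "counted f" "counted g"] by auto
next
  case (4 ts c k)
  have "card (counted (Cmp ts c k)) \<le> (\<Sum>p\<leftarrow>ts. card (tcounted (snd p)))"
    by (simp add: card_UN_set_le_sum_list finite_counted)
  also have "\<dots> \<le> (\<Sum>p\<leftarrow>ts. 1 + blen (fst p) + tsize (snd p))"
    using 4 by (intro sum_list_mono) fastforce
  finally show ?case by simp
next
  case (6 f)
  then show ?case by (simp add: card_insert_if finite_counted)
qed auto

lemma counted_closed:
  fixes f :: "'a form" and t :: "'a cterm"
  shows "g \<in> counted f \<Longrightarrow> counted g \<subseteq> counted f"
    and "g \<in> tcounted t \<Longrightarrow> counted g \<subseteq> tcounted t"
  by (induct f and t rule: counted_tcounted.induct) force+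

lemma refs_counted_subset:
  fixes f :: "'a form" and t :: "'a cterm"
  shows "g \<in> counted f \<Longrightarrow> refs g \<subseteq> refs f"
    and "g \<in> tcounted t \<Longrightarrow> refs g \<subseteq> trefs t"
  by (induct f and t rule: counted_tcounted.induct) force+

lemma thresholds_below_counted:
  fixes f :: "'a form" and t :: "'a cterm"
  shows "g \<in> counted f \<Longrightarrow> thresholds_below C f \<Longrightarrow> thresholds_below C g"
    and "g \<in> tcounted t \<Longrightarrow> tthresholds_below C t \<Longrightarrow> thresholds_below C g"
  by (induct f and t rule: counted_tcounted.induct) force+

lemma less_two_power_blen: "k < 2 ^ blen k"
  by (induction k rule: blen.induct) (subst blen.simps, auto)

lemma thresholds_below_size:
  fixes f :: "'a form" and t :: "'a cterm"
  shows "fsize f \<le> s \<Longrightarrow> thresholds_below (2 ^ s) f"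
    and "tsize t \<le> s \<Longrightarrow> tthresholds_below (2 ^ s) t"
proof (induct f and t arbitrary: s and s rule: counted_tcounted.induct)
  case (4 ts c k)
  have "k < 2 ^ blen k" by (rule less_two_power_blen)
  also have "\<dots> \<le> 2 ^ s" using 4(2) by (intro power_increasing) auto
  finally have "k < 2 ^ s" .
  moreover have "tsize (snd p) \<le> s" if "p \<in> set ts" for p
    using that 4(2) member_le_sum_list[of "1 + blen (fst p) + tsize (snd p)"
        "map (\<lambda>p. 1 + blen (fst p) + tsize (snd p)) ts"]
    by auto
  ultimately show ?case using 4(1) by auto
qed auto

lemma min_add_min: "min (C::nat) (min C x + y) = min C (x + y)"
  by (simp add: min_def)

lemma min_mult_add_min: "min (C::nat) (a * min C x + min C y) = min C (a * x + y)"
proof (cases "x \<le> C \<or> a = 0")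
  case True
  then show ?thesis using min_add_min[of C y "a * x"] by (auto simp: add.commute)
next
  case False
  then obtain b where "a = Suc b" "C < x" by (cases a) auto
  then show ?thesis by (simp add: min_def)
qed

lemma min_mult_add_cong:
  "min (C::nat) x = min C x' \<Longrightarrow> min C y = min C y' \<Longrightarrow> min C (a * x + y) = min C (a * x' + y')"
  by (metis min_mult_add_min)

lemma min_sum_list_mult_cong:
  "(\<And>p. p \<in> set ts \<Longrightarrow> min (C::nat) (x p) = min C (y p)) \<Longrightarrow>
   min C (\<Sum>p\<leftarrow>ts. fst p * x p) = min C (\<Sum>p\<leftarrow>ts. fst p * y p)"
  by (induction ts) (auto intro: min_mult_add_cong)

lemma cmp_sem_min: "k < C \<Longrightarrow> cmp_sem c (min C s) k = cmp_sem c s k"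
  by (cases c) (auto simp: min_def)

lemma card_Collect_atLeastAtMost_Suc:
  "card {j \<in> {1..Suc i}. Q j} = card {j \<in> {1..i}. Q j} + (if Q (Suc i) then 1 else 0)"
proof -
  have "{j \<in> {1..Suc i}. Q j} = {j \<in> {1..i}. Q j} \<union> (if Q (Suc i) then {Suc i} else {})"
    by (auto simp: le_Suc_eq)
  then show ?thesis by (simp add: card_insert_if)
qed

lemma tval_Cnt_Suc:
  "tval E w (Suc i) (Cnt g) = tval E w i (Cnt g) + (if holds E w (Suc i) g then 1 else 0)"
  unfolding tval.simps by (rule card_Collect_atLeastAtMost_Suc)

lemma min_tval_Cnt_Suc_cong:
  assumes "holds E w (Suc i) g = holds E' w' (Suc i') g"
    and "min C (tval E w i (Cnt g)) = min C (tval E' w' i' (Cnt g))"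
  shows "min C (tval E w (Suc i) (Cnt g)) = min C (tval E' w' (Suc i') (Cnt g))"
proof -
  have "min C (tval E w (Suc i) (Cnt g))
      = min C (min C (tval E w i (Cnt g)) + (if holds E w (Suc i) g then 1 else 0))"
    by (simp only: tval_Cnt_Suc min_add_min)
  also have "\<dots> = min C (min C (tval E' w' i' (Cnt g)) + (if holds E' w' (Suc i') g then 1 else 0))"
    by (simp only: assms)
  also have "\<dots> = min C (tval E' w' (Suc i') (Cnt g))"
    by (simp only: tval_Cnt_Suc min_add_min)
  finally show ?thesis .
qed

lemma holds_Suc_capped_cong:
  fixes f :: "'a form" and t :: "'a cterm"
  assumes counts: "\<And>g. g \<in> S \<Longrightarrow> min C (tval E w i (Cnt g)) = min C (tval E' w' i' (Cnt g))"
    and letter: "\<And>s. holds E w (Suc i) (Sym s) = holds E' w' (Suc i') (Sym s)"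
  shows "counted f \<subseteq> S \<Longrightarrow> thresholds_below C f \<Longrightarrow>
      (\<forall>j\<in>refs f. E j (Suc i) = E' j (Suc i')) \<Longrightarrow>
      holds E w (Suc i) f = holds E' w' (Suc i') f"
    and "tcounted t \<subseteq> S \<Longrightarrow> tthresholds_below C t \<Longrightarrow>
      (\<forall>j\<in>trefs t. E j (Suc i) = E' j (Suc i')) \<Longrightarrow>
      min C (tval E w (Suc i) t) = min C (tval E' w' (Suc i') t)"
proof (induct f and t rule: counted_tcounted.induct)
  case (1 s)
  then show ?case using letter by blast
next
  case (4 ts c k)
  let ?s = "\<Sum>p\<leftarrow>ts. fst p * tval E w (Suc i) (snd p)"
  let ?s' = "\<Sum>p\<leftarrow>ts. fst p * tval E' w' (Suc i') (snd p)"
  from 4 have "k < C" and "min C ?s = min C ?s'"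
    by (auto intro!: min_sum_list_mult_cong)
  have "holds E w (Suc i) (Cmp ts c k) = cmp_sem c (min C ?s) k"
    using \<open>k < C\<close> by (simp add: cmp_sem_min)
  also have "\<dots> = cmp_sem c (min C ?s') k"
    by (simp only: \<open>min C ?s = min C ?s'\<close>)
  also have "\<dots> = holds E' w' (Suc i') (Cmp ts c k)"
    using \<open>k < C\<close> by (simp add: cmp_sem_min)
  finally show ?case .
next
  case (6 g)
  then have "holds E w (Suc i) g = holds E' w' (Suc i') g"
    and "min C (tval E w i (Cnt g)) = min C (tval E' w' i' (Cnt g))"
    using counts by auto
  then show ?case by (rule min_tval_Cnt_Suc_cong)
qed auto

lemma holds_cong_refs:
  fixes f :: "'a form" and t :: "'a cterm"
  shows "(\<forall>j\<in>refs f. E j = E' j) \<Longrightarrow> holds E w i f = holds E' w i f"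
    and "(\<forall>j\<in>trefs t. E j = E' j) \<Longrightarrow> tval E w i t = tval E' w i t"
  by (induct f and t arbitrary: i and i rule: counted_tcounted.induct) (auto cong: map_cong)

lemma holds_append:
  fixes f :: "'a form" and t :: "'a cterm"
  assumes "\<And>j i. i \<le> length u \<Longrightarrow> E j i = E' j i"
  shows "i \<le> length u \<Longrightarrow> holds E (u @ v) i f = holds E' u i f"
    and "i \<le> length u \<Longrightarrow> tval E (u @ v) i t = tval E' u i t"
proof (induct f and t arbitrary: i and i rule: counted_tcounted.induct)
  case (6 g)
  then have "{j \<in> {1..i}. holds E (u @ v) j g} = {j \<in> {1..i}. holds E' u j g}"
    by auto
  then show ?case by simp
qed (auto simp: assms nth_append cong: map_cong)

lemma penv_append: "i \<le> length u \<Longrightarrow> penv P (u @ v) k j i = penv P u k j i"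
  by (induction k arbitrary: j i) (auto simp: holds_append)

lemma penv_stable: "j < k \<Longrightarrow> penv P w k j = penv P w (Suc j) j"
  by (induction k) (auto simp: less_Suc_eq)

lemma penv_length_fixpoint:
  assumes "wf_prog P" and "j < length P"
  shows "penv P w (length P) j i = holds (penv P w (length P)) w i (P ! j)"
proof -
  have "penv P w (length P) j i = holds (penv P w j) w i (P ! j)"
    using penv_stable[OF assms(2), of P w] by simp
  also have "\<dots> = holds (penv P w (length P)) w i (P ! j)"
  proof (rule holds_cong_refs(1), intro ballI)
    fix l assume "l \<in> refs (P ! j)"
    then have "l < j" using assms unfolding wf_prog_def by auto
    then show "penv P w j l = penv P w (length P) l"
      using penv_stable[of l j P w] penv_stable[of l "length P" P w] assms(2) by simp
  qed
  finally show ?thesis .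
qed

locale crasp_program =
  fixes P :: "'a prog"
  assumes wf: "wf_prog P"
begin

definition counted_lines :: "'a form set" where
  "counted_lines = (\<Union>f\<in>set P. counted f)"

definition cap :: nat where
  "cap = 2 ^ psize P"

abbreviation env :: "'a list \<Rightarrow> nat \<Rightarrow> nat \<Rightarrow> bool" where
  "env w \<equiv> penv P w (length P)"

definition state :: "'a list \<Rightarrow> 'a form \<Rightarrow> nat" where
  "state w = (\<lambda>g\<in>counted_lines. min cap (tval (env w) w (length w) (Cnt g)))"

definition states :: "('a form \<Rightarrow> nat) set" where
  "states = counted_lines \<rightarrow>\<^sub>E {0..cap}"

lemma thresholds_below_cap: "f \<in> set P \<Longrightarrow> thresholds_below cap f"
  unfolding cap_def psize_def by (intro thresholds_below_size(1) member_le_sum_list) auto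

lemma refs_nth_less: "j < length P \<Longrightarrow> l \<in> refs (P ! j) \<Longrightarrow> l < j"
  using wf unfolding wf_prog_def by blast

lemma tval_env_append:
  "i \<le> length u \<Longrightarrow> tval (env (u @ v)) (u @ v) i t = tval (env u) u i t"
  by (intro holds_append(2) penv_append)

context
  fixes u u' :: "'a list" and a :: 'a
  assumes same_state: "state u = state u'"
begin

lemma capped_counts_snoc_eq:
  assumes "g \<in> counted_lines"
  shows "min cap (tval (env (u @ [a])) (u @ [a]) (length u) (Cnt g))
    = min cap (tval (env (u' @ [a])) (u' @ [a]) (length u') (Cnt g))"
proof -
  have "min cap (tval (env (u @ [a])) (u @ [a]) (length u) (Cnt g)) = state u g"
    using assms by (simp add: state_def tval_env_append del: tval.simps)
  also have "\<dots> = state u' g"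
    by (simp only: same_state)
  also have "\<dots> = min cap (tval (env (u' @ [a])) (u' @ [a]) (length u') (Cnt g))"
    using assms by (simp add: state_def tval_env_append del: tval.simps)
  finally show ?thesis .
qed

lemma holds_snoc_eq:
  assumes "counted f \<subseteq> counted_lines" and "thresholds_below cap f"
    and "\<And>j. j \<in> refs f \<Longrightarrow>
      env (u @ [a]) j (Suc (length u)) = env (u' @ [a]) j (Suc (length u'))"
  shows "holds (env (u @ [a])) (u @ [a]) (Suc (length u)) f
    = holds (env (u' @ [a])) (u' @ [a]) (Suc (length u')) f"
  by (rule holds_Suc_capped_cong(1)[OF capped_counts_snoc_eq _ assms(1,2)]) (simp_all add: assms(3))

lemma env_snoc_eq:
  "j < length P \<Longrightarrow> env (u @ [a]) j (Suc (length u)) = env (u' @ [a]) j (Suc (length u'))"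
proof (induction j rule: less_induct)
  case (less j)
  have "P ! j \<in> set P" using less.prems by simp
  then have "counted (P ! j) \<subseteq> counted_lines" and "thresholds_below cap (P ! j)"
    by (auto simp: counted_lines_def thresholds_below_cap)
  moreover have "env (u @ [a]) l (Suc (length u)) = env (u' @ [a]) l (Suc (length u'))"
    if "l \<in> refs (P ! j)" for l
    using refs_nth_less[OF less.prems that] less.prems by (intro less.IH) auto
  ultimately have "holds (env (u @ [a])) (u @ [a]) (Suc (length u)) (P ! j)
    = holds (env (u' @ [a])) (u' @ [a]) (Suc (length u')) (P ! j)"
    by (rule holds_snoc_eq)
  then show ?case by (simp only: penv_length_fixpoint[OF wf less.prems])
qed

lemma state_snoc_eq: "state (u @ [a]) = state (u' @ [a])"
proof
  fix g
  show "state (u @ [a]) g = state (u' @ [a]) g"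
  proof (cases "g \<in> counted_lines")
    case True
    then obtain f where f: "f \<in> set P" "g \<in> counted f" by (auto simp: counted_lines_def)
    obtain k where k: "k < length P" "f = P ! k"
      using f(1) by (auto simp: in_set_conv_nth)
    have "counted g \<subseteq> counted_lines"
      using f counted_closed(1)[OF f(2)] by (auto simp: counted_lines_def)
    moreover have "thresholds_below cap g"
      using thresholds_below_counted(1)[OF f(2) thresholds_below_cap[OF f(1)]] .
    moreover have "env (u @ [a]) l (Suc (length u)) = env (u' @ [a]) l (Suc (length u'))"
      if "l \<in> refs g" for l
    proof (rule env_snoc_eq)
      show "l < length P"
        using that k refs_counted_subset(1)[OF f(2)] refs_nth_less[of k l] by auto
    qed
    ultimately have "holds (env (u @ [a])) (u @ [a]) (Suc (length u)) g
      = holds (env (u' @ [a])) (u' @ [a]) (Suc (length u')) g"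
      by (rule holds_snoc_eq)
    moreover note capped_counts_snoc_eq[OF True]
    ultimately have "min cap (tval (env (u @ [a])) (u @ [a]) (Suc (length u)) (Cnt g))
      = min cap (tval (env (u' @ [a])) (u' @ [a]) (Suc (length u')) (Cnt g))"
      by (rule min_tval_Cnt_Suc_cong)
    then show ?thesis
      using True by (simp only: state_def restrict_apply' length_append_singleton)
  qed (simp only: state_def restrict_apply if_False)
qed

end

lemma state_append_eq: "state u = state u' \<Longrightarrow> state (u @ v) = state (u' @ v)"
proof (induction v rule: rev_induct)
  case (snoc b v)
  then show ?case using state_snoc_eq[of "u @ v" "u' @ v" b] by simp
qed simp

text \<open>The state of u only determines the lines at the position after u, so the cut-out
  block must be followed by at least one letter.\<close>

lemma accepts_append_snoc_eq:
  assumes "state u = state u'"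
  shows "accepts P (u @ v @ [a]) = accepts P (u' @ v @ [a])"
proof -
  have "length P - 1 < length P" using wf unfolding wf_prog_def by simp
  then have "env ((u @ v) @ [a]) (length P - 1) (Suc (length (u @ v)))
    = env ((u' @ v) @ [a]) (length P - 1) (Suc (length (u' @ v)))"
    by (rule env_snoc_eq[OF state_append_eq[OF assms]])
  then show ?thesis by (simp add: accepts_def)
qed

lemma state_in_states: "state w \<in> states"
  unfolding states_def state_def by auto

lemma finite_counted_lines: "finite counted_lines"
  unfolding counted_lines_def by (simp add: finite_counted)

lemma finite_states: "finite states"
  unfolding states_def by (simp add: finite_PiE finite_counted_lines)

lemma card_states_le: "card states \<le> 2 ^ ((psize P + 1) * psize P)"
proof -
  have "card counted_lines \<le> (\<Sum>f\<leftarrow>P. card (counted f))"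
    unfolding counted_lines_def by (rule card_UN_set_le_sum_list) (simp add: finite_counted)
  also have "\<dots> \<le> psize P"
    unfolding psize_def by (intro sum_list_mono card_counted_le_size(1))
  finally have "card counted_lines \<le> psize P" .
  have "card states = (cap + 1) ^ card counted_lines"
    unfolding states_def by (simp add: card_PiE finite_counted_lines)
  also have "\<dots> \<le> (cap + 1) ^ psize P"
    using \<open>card counted_lines \<le> psize P\<close> by (intro power_increasing) auto
  also have "\<dots> \<le> (2 ^ (psize P + 1)) ^ psize P"
    unfolding cap_def by (intro power_mono) auto
  also have "\<dots> = 2 ^ ((psize P + 1) * psize P)"
    by (rule power_mult[symmetric])
  finally show ?thesis .
qed

lemma accepts_shorter:
  assumes acc: "accepts P w" and long: "card states < length w"
  obtains w' where "accepts P w'" and "length w' < length w"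
proof -
  have "card states < card {..<length w}" using long by simp
  moreover have "(\<lambda>i. state (take i w)) ` {..<length w} \<subseteq> states"
    using state_in_states by auto
  ultimately have "\<not> inj_on (\<lambda>i. state (take i w)) {..<length w}"
    using finite_states by (meson card_mono le_less_trans pigeonhole)
  then obtain x y where xy: "x < length w" "y < length w" "x \<noteq> y"
    and "state (take x w) = state (take y w)"
    unfolding inj_on_def by auto
  then obtain i j where "i < j" "j < length w" and same: "state (take i w) = state (take j w)"
    by (cases "x < y") (auto simp: not_less_iff_gr_or_eq)
  then have "drop j w \<noteq> []" by simp
  then obtain v b where vb: "drop j w = v @ [b]"
    using rev_exhaust by blast
  then have "w = take j w @ v @ [b]"
    using append_take_drop_id[of j w] by simp
  then have "accepts P (take i w @ v @ [b])"
    using acc accepts_append_snoc_eq[OF same, of v b] by simp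
  moreover have "length (take i w @ v @ [b]) < length w"
    using \<open>i < j\<close> \<open>j < length w\<close> arg_cong[OF vb, of length] by simp
  ultimately show ?thesis by (rule that)
qed

lemma accepts_short: "accepts P w \<Longrightarrow> \<exists>w'. accepts P w' \<and> length w' \<le> card states"
proof (induction "length w" arbitrary: w rule: less_induct)
  case less
  show ?case
  proof (cases "length w \<le> card states")
    case False
    then have "card states < length w" by simp
    then obtain w' where "accepts P w'" "length w' < length w"
      by (rule accepts_shorter[OF less.prems])
    then show ?thesis using less.hyps by blast
  qed (use less.prems in blast)
qed

end

lemma lang_exponentially_short:
  assumes "wf_prog P" and "lang P \<noteq> {}"
  shows "\<exists>w \<in> lang P. length w \<le> 2 ^ ((psize P + 1) * psize P)"
proof -
  interpret crasp_program P by unfold_locales (fact assms(1))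
  from assms(2) obtain w where "accepts P w" by (auto simp: lang_def)
  then obtain w' where "accepts P w'" and "length w' \<le> card states"
    using accepts_short by blast
  with card_states_le show ?thesis by (auto simp: lang_def)
qed

lemma blen_one: "blen (Suc 0) = Suc 0"
  by (subst blen.simps) simp

lemma blen_power_two: "blen (2 ^ m) = m + 1"
proof (induction m)
  case (Suc m)
  have "(2::nat) ^ Suc m > 1" by (rule one_less_power) simp_all
  then show ?case using Suc by (subst blen.simps) simp
qed (simp add: blen_one)

definition count_at_least :: "'a \<Rightarrow> nat \<Rightarrow> 'a prog" where
  "count_at_least x k = [Cmp [(1, Cnt (Sym x))] CGe k]"

lemma wf_count_at_least: "wf_prog (count_at_least x k)"
  by (simp add: wf_prog_def count_at_least_def)

lemma psize_count_at_least: "psize (count_at_least x k) = blen k + 5"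
  by (simp add: count_at_least_def psize_def blen_one)

lemma lang_count_at_least:
  "w \<in> lang (count_at_least x k) \<longleftrightarrow> k \<le> card {j \<in> {1..length w}. w ! (j - 1) = x}"
proof -
  have "{j \<in> {1..length w}. 1 \<le> j \<and> j \<le> length w \<and> w ! (j - 1) = x}
      = {j \<in> {1..length w}. w ! (j - 1) = x}"
    by auto
  then show ?thesis by (simp add: lang_def accepts_def count_at_least_def)
qed

lemma replicate_in_lang_count_at_least: "replicate k x \<in> lang (count_at_least x k)"
proof -
  have "{j \<in> {1..k}. replicate k x ! (j - 1) = x} = {1..k}" by auto
  then show ?thesis by (simp add: lang_count_at_least)
qed

lemma length_ge_if_in_lang_count_at_least:
  assumes "w \<in> lang (count_at_least x k)"
  shows "k \<le> length w"
proof -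
  have "card {j \<in> {1..length w}. w ! (j - 1) = x} \<le> card {1..length w}"
    by (rule card_mono) auto
  then show ?thesis using assms unfolding lang_count_at_least by simp
qed

lemma psize_count_at_least_power_two: "psize (count_at_least x (2 ^ (n + 1))) = n + 7"
  using blen_power_two[of "n + 1"] by (simp add: psize_count_at_least)

lemma length_exponential_if_in_lang_count_at_least:
  assumes "w \<in> lang (count_at_least x (2 ^ (n + 1)))"
  shows "2 powr (1 / 7 * real (psize (count_at_least x (2 ^ (n + 1))))) \<le> real (length w)"
proof -
  have "2 powr (1 / 7 * real (psize (count_at_least x (2 ^ (n + 1))))) \<le> 2 powr real (n + 1)"
    unfolding psize_count_at_least_power_two by (intro powr_mono) auto
  also have "\<dots> = 2 ^ (n + 1)"
    by (rule powr_realpow) simp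
  also have "\<dots> = real (2 ^ (n + 1))"
    by simp
  also have "\<dots> \<le> real (length w)"
    using length_ge_if_in_lang_count_at_least[OF assms] by (rule of_nat_mono)
  finally show ?thesis .
qed

theorem proposition4p6:
  fixes dummy :: "'a :: finite"
  shows "(\<exists>q :: nat poly. \<forall>P :: 'a prog. wf_prog P \<longrightarrow> lang P \<noteq> {} \<longrightarrow>
            (\<exists>w \<in> lang P. length w \<le> 2 ^ poly q (psize P)))
       \<and> (\<exists>(Pn :: nat \<Rightarrow> 'a prog) (c :: real). c > 0 \<and> strict_mono (\<lambda>n. psize (Pn n)) \<and>
            (\<forall>n. wf_prog (Pn n) \<and> lang (Pn n) \<noteq> {} \<and>
                 (\<forall>w \<in> lang (Pn n). 2 powr (c * real (psize (Pn n))) \<le> real (length w))))"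
proof (intro conjI)
  have "poly [:0, 1, 1:] s = (s + 1) * s" for s :: nat
    by (simp add: algebra_simps)
  then show "\<exists>q :: nat poly. \<forall>P :: 'a prog. wf_prog P \<longrightarrow> lang P \<noteq> {} \<longrightarrow>
      (\<exists>w \<in> lang P. length w \<le> 2 ^ poly q (psize P))"
    using lang_exponentially_short by metis
next
  let ?Pn = "\<lambda>n. count_at_least (undefined :: 'a) (2 ^ (n + 1))"
  show "\<exists>(Pn :: nat \<Rightarrow> 'a prog) (c :: real). c > 0 \<and> strict_mono (\<lambda>n. psize (Pn n)) \<and>
      (\<forall>n. wf_prog (Pn n) \<and> lang (Pn n) \<noteq> {} \<and>
        (\<forall>w \<in> lang (Pn n). 2 powr (c * real (psize (Pn n))) \<le> real (length w)))"
  proof (intro exI[of _ ?Pn] exI[of _ "1 / 7"] conjI allI ballI)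
    show "strict_mono (\<lambda>n. psize (?Pn n))"
      unfolding psize_count_at_least_power_two by (simp add: strict_mono_def)
    show "lang (?Pn n) \<noteq> {}" for n
      using replicate_in_lang_count_at_least by (metis empty_iff)
    show "wf_prog (?Pn n)" for n
      by (rule wf_count_at_least)
    show "2 powr (1 / 7 * real (psize (?Pn n))) \<le> real (length w)" if "w \<in> lang (?Pn n)" for n w
      using that by (rule length_exponential_if_in_lang_count_at_least)
  qed simp
qed

end
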